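(* For every positive integer $s$, the maximum size $l(s)$ of an $(s,s+1,s+2)$-core partition is $$l(s)=\begin{cases} m\binom{m+1}{3}, & s=2m-1,\\[4pt] (m+1)\binom{m+1}{3}+\binom{m+2}{3}, & s=2m.\end{cases}$$
   Context: A partition is an $(s,s+1,s+2)$-core if none of the hook lengths of the boxes of its Young diagram is divisible by $s$, by $s+1$, or by $s+2$. The size of a partition is the sum of its parts. *)

theory Defs
  imports Main
begin

definition partition :: "nat list \<Rightarrow> bool" where
  "partition p \<longleftrightarrow> sorted_wrt (\<ge>) p \<and> (\<forall>x\<in>set p. 0 < x)"

definition psize :: "nat list \<Rightarrow> nat" where
  "psize p = sum_list p"

text \<open>Cells of the Young diagram (0-indexed row i, column j).\<close>
definition cells :: "nat list \<Rightarrow> (nat \<times> nat) set" where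
  "cells p = {(i, j). i < length p \<and> j < p ! i}"

definition conj_part :: "nat list \<Rightarrow> nat \<Rightarrow> nat" where
  "conj_part p j = card {i. i < length p \<and> j < p ! i}"

definition hook :: "nat list \<Rightarrow> nat \<Rightarrow> nat \<Rightarrow> nat" where
  "hook p i j = (p ! i - j - 1) + (conj_part p j - i - 1) + 1"

definition is_core :: "nat \<Rightarrow> nat list \<Rightarrow> bool" where
  "is_core t p \<longleftrightarrow> (\<forall>(i, j)\<in>cells p. \<not> t dvd hook p i j)"

definition is_s_triple_core :: "nat \<Rightarrow> nat list \<Rightarrow> bool" where
  "is_s_triple_core s p \<longleftrightarrow> partition p \<and> is_core s p \<and> is_core (s+1) p \<and> is_core (s+2) p"

definition is_max_triple_core_size :: "nat \<Rightarrow> nat \<Rightarrow> bool" where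
  "is_max_triple_core_size s l \<longleftrightarrow>
     (\<exists>p. is_s_triple_core s p \<and> psize p = l) \<and> (\<forall>p. is_s_triple_core s p \<longrightarrow> psize p \<le> l)"

end

theory Submission
  imports Defs
begin

text \<open>
  A partition p is encoded by its beta-set, the set of first-column hook lengths.
  Standard facts: the hook lengths of row i are the differences beta i - x with x < beta i a
  non-beta-number, so p is a t-core iff its beta-set B is closed under subtracting t; the
  size of p is sum B - (0 + 1 + ... + (card B - 1)); and every finite set of positive
  integers is a beta-set.  The theorem thus becomes an optimisation over finite sets B of
  positive integers closed under subtracting s, s + 1 and s + 2.

  Cut such a B into levels modulo s (the rows of the s-abacus).  Closure forces level k to
  consist of residues at least 2k + 1 and each nonempty level to be smaller than the one
  below by at least two.  For fixed level sizes n k the size is largest when every level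
  takes its top residues, which bounds twice the size by a quadratic "energy" of the profile
  n.  Comparing an admissible profile with the centred arithmetic progression of step 2
  shows the energy is at most 2 l(s).  Finally the staircase set, whose level k is
  {2k + 1, ..., s - 1}, is triple-closed and attains the bound.
\<close>

section \<open>Beta-sets: first-column hook lengths\<close>

text \<open>The first-column hook length of row i; the set of these numbers is the beta-set of p.\<close>
definition beta :: "nat list \<Rightarrow> nat \<Rightarrow> nat" where
  "beta p i = p ! i + (length p - 1 - i)"

definition beta_set :: "nat list \<Rightarrow> nat set" where
  "beta_set p = beta p ` {..<length p}"

lemma part_mono:
  assumes "partition p" "i \<le> i'" "i' < length p"
  shows "p ! i' \<le> p ! i"
proof (cases "i = i'")
  case False
  with assms show ?thesis
    unfolding partition_def by (auto simp: sorted_wrt_iff_nth_less)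
qed simp

lemma part_pos:
  assumes "partition p" "i < length p"
  shows "0 < p ! i"
  using assms unfolding partition_def by auto

lemma beta_less:
  assumes "partition p" "a < b" "b < length p"
  shows "beta p b < beta p a"
  using part_mono[OF assms(1), of a b] assms unfolding beta_def by auto

lemma beta_inj:
  assumes "partition p"
  shows "inj_on (beta p) {..<length p}"
proof (rule inj_onI)
  fix a b assume "a \<in> {..<length p}" "b \<in> {..<length p}" "beta p a = beta p b"
  then show "a = b" using beta_less[OF assms, of a b] beta_less[OF assms, of b a]
    by (cases a b rule: linorder_cases) auto
qed

lemma zero_notin_beta_set:
  assumes "partition p"
  shows "0 \<notin> beta_set p"
  using part_pos[OF assms] unfolding beta_set_def beta_def by fastforce

lemma card_beta_set:
  assumes "partition p"
  shows "card (beta_set p) = length p"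
  unfolding beta_set_def using card_image[OF beta_inj[OF assms]] by simp

text \<open>A finite downward closed set of naturals is an initial segment.  This identifies
  the rows satisfying a condition inherited upwards (such as a long row) with a prefix.\<close>
lemma down_closed_eq:
  fixes S :: "nat set"
  assumes "finite S" "\<And>i i'. i \<in> S \<Longrightarrow> i' < i \<Longrightarrow> i' \<in> S"
  shows "S = {..<card S}"
proof -
  define m where "m = (if S = {} then 0 else Suc (Max S))"
  have "S = {..<m}"
  proof
    show "S \<subseteq> {..<m}" using assms(1) by (auto simp: m_def less_Suc_eq_le)
    show "{..<m} \<subseteq> S"
    proof
      fix i assume "i \<in> {..<m}"
      then have "S \<noteq> {}" "i \<le> Max S" by (auto simp: m_def split: if_splits)
      then show "i \<in> S" using assms Max_in[OF assms(1)]
        by (metis le_neq_implies_less)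
    qed
  qed
  then show ?thesis by simp
qed

lemma conj_part_iff:
  assumes "partition p" "i < length p"
  shows "i < conj_part p j \<longleftrightarrow> j < p ! i"
proof -
  let ?S = "{i. i < length p \<and> j < p ! i}"
  have "?S = {..<card ?S}"
  proof (rule down_closed_eq)
    show "i' \<in> ?S" if "i0 \<in> ?S" "i' < i0" for i0 i'
      using that part_mono[OF assms(1), of i' i0] by auto
  qed simp
  then show ?thesis using assms unfolding conj_part_def by blast
qed

lemma conj_part_le: "conj_part p j \<le> length p"
  unfolding conj_part_def by (rule order_trans[OF card_mono[of "{..<length p}"]]) auto

lemma hook_beta:
  assumes "partition p" "i < length p" "j < p ! i"
  shows "hook p i j + (j + (length p - conj_part p j)) = beta p i"
    and "j + (length p - conj_part p j) \<notin> beta_set p"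
proof -
  let ?n = "length p" and ?c = "conj_part p j"
  have ic: "i < ?c" using conj_part_iff[OF assms(1,2)] assms(3) by simp
  have cn: "?c \<le> ?n" by (rule conj_part_le)
  show "hook p i j + (j + (?n - ?c)) = beta p i"
    using ic cn assms(3) unfolding hook_def beta_def by auto
  show "j + (?n - ?c) \<notin> beta_set p"
  proof
    assume "j + (?n - ?c) \<in> beta_set p"
    then obtain i' where i': "i' < ?n" "beta p i' = j + (?n - ?c)"
      unfolding beta_set_def by auto
    show False
    proof (cases "i' < ?c")
      case True
      then have "j < p ! i'" using conj_part_iff[OF assms(1) i'(1)] by simp
      then show False using i' True cn unfolding beta_def by auto
    next
      case False
      then have "p ! i' \<le> j" using conj_part_iff[OF assms(1) i'(1)] by simp
      then show False using i' False cn unfolding beta_def by auto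
    qed
  qed
qed

lemma conj_part_eqI:
  assumes "c \<le> length p" "\<And>i. i < c \<Longrightarrow> j < p ! i"
    "\<And>i. c \<le> i \<Longrightarrow> i < length p \<Longrightarrow> p ! i \<le> j"
  shows "conj_part p j = c"
proof -
  have "{i. i < length p \<and> j < p ! i} = {..<c}"
    using assms by (auto simp: not_le[symmetric])
  then show ?thesis unfolding conj_part_def by simp
qed

text \<open>The rows whose
  beta-number exceeds x form a prefix {..<c}; the n - c remaining beta-numbers lie below x,
  and the wanted column j = x - (n - c) counts the non-beta-numbers below x.  Exactly the
  first c rows reach column j, which gives the hook length.\<close>
lemma hook_exists:
  assumes "partition p" "i < length p" "x < beta p i" "x \<notin> beta_set p"
  shows "\<exists>j < p ! i. hook p i j + x = beta p i"
proof -
  let ?n = "length p"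
  let ?S = "{i'. i' < ?n \<and> x < beta p i'}"
  have "?S = {..<card ?S}"
  proof (rule down_closed_eq)
    show "i' \<in> ?S" if "i0 \<in> ?S" "i' < i0" for i0 i'
      using that beta_less[OF assms(1), of i' i0] by auto
  qed simp
  moreover define c where "c = card ?S"
  ultimately have above: "\<And>i'. i' < ?n \<Longrightarrow> i' < c \<longleftrightarrow> x < beta p i'" by blast
  have cn: "c \<le> ?n" unfolding c_def by (rule order_trans[OF card_mono[of "{..<?n}"]]) auto
  have ic: "i < c" using above[OF assms(2)] assms(3) by simp
  have below: "beta p i' < x" if "c \<le> i'" "i' < ?n" for i'
    using above[OF that(2)] that assms(4) unfolding beta_set_def by fastforce
  have "?n - c \<le> x"
  proof -
    have "beta p ` {c..<?n} \<subseteq> {..<x}" using below by auto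
    moreover have "inj_on (beta p) {c..<?n}"
      using beta_inj[OF assms(1)] by (rule inj_on_subset) auto
    ultimately have "card {c..<?n} \<le> card {..<x}"
      by (metis card_image card_mono finite_lessThan)
    then show ?thesis by simp
  qed
  define j where "j = x + c - ?n"
  have long: "j < p ! i'" if "i' < c" for i'
  proof -
    have "x < beta p (c - 1)" using above[of "c - 1"] that cn by simp
    moreover have "p ! (c - 1) \<le> p ! i'" using part_mono[OF assms(1), of i' "c - 1"] that cn by simp
    moreover have "0 < p ! i'" using part_pos[OF assms(1)] that cn by simp
    ultimately show ?thesis using that cn unfolding j_def beta_def by arith
  qed
  have short: "p ! i' \<le> j" if "c \<le> i'" "i' < ?n" for i'
  proof -
    have "beta p c < x" using below[of c] that by auto
    moreover have "p ! i' \<le> p ! c" using part_mono[OF assms(1) that] .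
    ultimately show ?thesis using that cn \<open>?n - c \<le> x\<close> unfolding j_def beta_def by auto
  qed
  have "conj_part p j = c" using conj_part_eqI[OF cn long short] by blast
  then have "hook p i j + x = beta p i"
    unfolding hook_def using ic long[OF ic] cn \<open>?n - c \<le> x\<close> unfolding j_def beta_def by auto
  then show ?thesis using long[OF ic] by blast
qed

definition sub_closed :: "nat \<Rightarrow> nat set \<Rightarrow> bool" where
  "sub_closed t B \<longleftrightarrow> (\<forall>b\<in>B. t \<le> b \<longrightarrow> b - t \<in> B)"

lemma is_core_iff_sub_closed:
  assumes "partition p" "0 < t"
  shows "is_core t p \<longleftrightarrow> sub_closed t (beta_set p)"
proof
  assume core: "is_core t p"
  show "sub_closed t (beta_set p)" unfolding sub_closed_def
  proof (intro ballI impI, rule ccontr)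
    fix b assume b: "b \<in> beta_set p" "t \<le> b" "b - t \<notin> beta_set p"
    obtain i where i: "i < length p" "b = beta p i" using b(1) unfolding beta_set_def by auto
    obtain j where j: "j < p ! i" "hook p i j + (b - t) = beta p i"
      using hook_exists[OF assms(1) i(1) _ b(3)] i assms(2) b(2) by auto
    have "hook p i j = t" using j(2) i(2) b(2) by simp
    moreover have "(i, j) \<in> cells p" using i j unfolding cells_def by simp
    ultimately show False using core unfolding is_core_def by auto
  qed
next
  assume closed: "sub_closed t (beta_set p)"
  have multiples: "b - q * t \<in> beta_set p" if "b \<in> beta_set p" "q * t \<le> b" for b q
    using that(2)
  proof (induction q)
    case (Suc q)
    then have "b - q * t \<in> beta_set p" "t \<le> b - q * t" by simp_all
    then have "b - q * t - t \<in> beta_set p" using closed unfolding sub_closed_def by blast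
    then show ?case by (simp add: algebra_simps)
  qed (use that in simp)
  show "is_core t p" unfolding is_core_def
  proof (clarify)
    fix i j assume "(i, j) \<in> cells p" and d: "t dvd hook p i j"
    then have i: "i < length p" and j: "j < p ! i" unfolding cells_def by auto
    obtain q where q: "hook p i j = q * t" using d by (auto simp: dvd_def mult.commute)
    let ?x = "j + (length p - conj_part p j)"
    have "beta p i \<in> beta_set p" using i unfolding beta_set_def by auto
    moreover have "q * t + ?x = beta p i" using hook_beta(1)[OF assms(1) i j] q by simp
    ultimately have "?x \<in> beta_set p" using multiples[of "beta p i" q] by (metis le_add1 add_diff_cancel_left')
    then show False using hook_beta(2)[OF assms(1) i j] by contradiction
  qed
qed

text \<open>Every finite set of positive integers is the beta-set of a partition: insert the largest
  element as a new first row on top of the partition realising the rest.\<close>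
lemma beta_set_surj:
  assumes "finite B" "0 \<notin> B"
  shows "\<exists>p. partition p \<and> beta_set p = B"
  using assms
proof (induction "card B" arbitrary: B)
  case 0
  then have "B = {}" by simp
  then show ?case by (intro exI[of _ "[]"]) (auto simp: partition_def beta_set_def)
next
  case (Suc n)
  define M where "M = Max B"
  define B' where "B' = B - {M}"
  have MB: "M \<in> B" using Max_in[OF Suc.prems(1)] Suc.hyps(2) M_def by fastforce
  have M0: "0 < M" using MB Suc.prems(2) by (cases M) auto
  have cB': "card B' = n" using Suc.hyps(2) MB unfolding B'_def by simp
  obtain p' where p': "partition p'" "beta_set p' = B'"
    using Suc.hyps(1)[of B'] cB' Suc.prems unfolding B'_def by auto
  have lp': "length p' = n" using card_beta_set[OF p'(1)] p'(2) cB' by simp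
  have below_M: "b < M" if "b \<in> B'" for b
    using that Max_ge[OF Suc.prems(1)] unfolding B'_def M_def by fastforce
  define a where "a = M - n"
  define p where "p = a # p'"
  have first_row: "p' ! 0 + n \<le> M" if "n > 0"
  proof -
    have "beta p' 0 \<in> B'" using p'(2) lp' that unfolding beta_set_def by auto
    then show ?thesis using below_M unfolding beta_def using lp' that by fastforce
  qed
  have apos: "0 < a"
    using M0 first_row part_pos[OF p'(1), of 0] lp' unfolding a_def by (cases "n = 0") auto
  have age: "x \<le> a" if x: "x \<in> set p'" for x
  proof -
    obtain k where k: "k < n" "x = p' ! k" using x lp'[symmetric] by (auto simp: in_set_conv_nth)
    then show ?thesis using part_mono[OF p'(1), of 0 k] first_row lp' unfolding a_def by auto
  qed
  have pp: "partition p" using p'(1) apos age unfolding partition_def p_def by auto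
  have "beta_set p = insert (beta p 0) ((\<lambda>i. beta p (Suc i)) ` {..<n})"
    unfolding beta_set_def p_def using lp' by (simp add: lessThan_Suc_eq_insert_0 image_image)
  also have "beta p 0 = M"
    unfolding beta_def p_def a_def using lp' first_row apos by (cases "n = 0") (auto simp: a_def)
  also have "(\<lambda>i. beta p (Suc i)) ` {..<n} = beta_set p'"
    unfolding beta_set_def beta_def p_def using lp' by auto
  finally have "beta_set p = B" using p'(2) MB unfolding B'_def by auto
  then show ?case using pp by blast
qed

lemma gauss_sum: "2 * (\<Sum>k<L. int k) = int L * (int L - 1)"
  by (induction L) (auto simp: algebra_simps)

lemma sum_squares: "6 * (\<Sum>k<L. (int k)^2) = int L * (int L - 1) * (2 * int L - 1)"
  by (induction L) (auto simp: algebra_simps power2_eq_square)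

text \<open>Twice the size of a partition, read off from its beta-set B:
  the sum of B exceeds the size by 0 + 1 + ... + (card B - 1).\<close>
definition twice_size :: "nat set \<Rightarrow> int" where
  "twice_size B = 2 * int (sum id B) - int (card B) * (int (card B) - 1)"

lemma twice_size_beta_set:
  assumes "partition p"
  shows "twice_size (beta_set p) = 2 * int (psize p)"
proof -
  let ?n = "length p"
  have "sum id (beta_set p) = (\<Sum>i<?n. beta p i)"
    unfolding beta_set_def by (simp add: sum.reindex[OF beta_inj[OF assms]])
  also have "\<dots> = (\<Sum>i<?n. p ! i) + (\<Sum>i<?n. ?n - 1 - i)"
    unfolding beta_def by (rule sum.distrib)
  also have "(\<Sum>i<?n. ?n - 1 - i) = (\<Sum>i<?n. i)"
    using sum.nat_diff_reindex[of "\<lambda>i. i" ?n] by simp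
  also have "(\<Sum>i<?n. p ! i) = psize p"
    unfolding psize_def by (simp add: sum_list_sum_nth atLeast0LessThan)
  finally have "int (sum id (beta_set p)) = int (psize p) + (\<Sum>i<?n. int i)" by simp
  then show ?thesis
    unfolding twice_size_def card_beta_set[OF assms] using gauss_sum[of ?n] by simp
qed

section \<open>Levels of a set of naturals modulo s\<close>

text \<open>Writing b = k * s + r with r < s, level k of B collects the residues r on row k
  of the s-abacus.\<close>
definition level :: "nat set \<Rightarrow> nat \<Rightarrow> nat \<Rightarrow> nat set" where
  "level B s k = {r. r < s \<and> k * s + r \<in> B}"

definition level_profile :: "nat set \<Rightarrow> nat \<Rightarrow> nat \<Rightarrow> int" where
  "level_profile B s k = int (card (level B s k))"

lemma finite_level: "finite (level B s k)"
  unfolding level_def by auto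

lemma uniq_divmod:
  fixes s :: nat
  assumes "k * s + r = k' * s + r'" "r < s" "r' < s"
  shows "k = k' \<and> r = r'"
proof -
  have "k = (k * s + r) div s" using assms(2) by simp
  also have "\<dots> = k'" unfolding assms(1) using assms(3) by simp
  finally show ?thesis using assms(1) by simp
qed

lemma level_decomposition:
  assumes "finite B" "0 < s" "\<And>k. L \<le> k \<Longrightarrow> level B s k = {}"
  shows "sum id B = (\<Sum>k<L. k * s * card (level B s k) + sum id (level B s k))"
    and "card B = (\<Sum>k<L. card (level B s k))"
proof -
  define f where "f = (\<lambda>(k, r). k * s + r)"
  define S where "S = (SIGMA k:{..<L}. level B s k)"
  have inj: "inj_on f S"
    by (rule inj_onI) (auto simp: S_def f_def level_def dest: uniq_divmod)
  have img: "f ` S = B"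
  proof
    show "f ` S \<subseteq> B" unfolding S_def f_def level_def by auto
    show "B \<subseteq> f ` S"
    proof
      fix b assume b: "b \<in> B"
      have r: "b mod s \<in> level B s (b div s)" using b assms(2) unfolding level_def by auto
      moreover have "b div s < L" using r assms(3)[of "b div s"] by (metis empty_iff not_le)
      ultimately have "(b div s, b mod s) \<in> S" unfolding S_def by simp
      moreover have "f (b div s, b mod s) = b" unfolding f_def by simp
      ultimately show "b \<in> f ` S" by force
    qed
  qed
  have "sum id B = (\<Sum>(k, r)\<in>S. k * s + r)"
    using sum.reindex[OF inj, of id] img unfolding f_def by (simp add: case_prod_beta')
  also have "\<dots> = (\<Sum>k<L. \<Sum>r\<in>level B s k. k * s + r)"
    unfolding S_def by (rule sum.Sigma[symmetric]) (auto simp: finite_level)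
  also have "\<dots> = (\<Sum>k<L. k * s * card (level B s k) + sum id (level B s k))"
    by (simp add: sum.distrib mult.commute)
  finally show "sum id B = (\<Sum>k<L. k * s * card (level B s k) + sum id (level B s k))" .
  have "card B = card S" using card_image[OF inj] img by simp
  also have "\<dots> = (\<Sum>k<L. card (level B s k))" unfolding S_def by (simp add: card_SigmaI finite_level)
  finally show "card B = (\<Sum>k<L. card (level B s k))" .
qed

lemma sum_below_le_top:
  "finite A \<Longrightarrow> A \<subseteq> {..<s} \<Longrightarrow>
     2 * int (sum id A) \<le> int (card A) * (2 * int s - 1 - int (card A))"
proof (induction s arbitrary: A)
  case (Suc s)
  show ?case
  proof (cases "s \<in> A")
    case True
    define A' where "A' = A - {s}"
    have "finite A'" "A' \<subseteq> {..<s}" using Suc.prems unfolding A'_def by auto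
    then have IH: "2 * int (sum id A') \<le> int (card A') * (2 * int s - 1 - int (card A'))"
      by (rule Suc.IH)
    have "card A = Suc (card A')" using card.remove[OF Suc.prems(1) True] unfolding A'_def .
    moreover have "sum id A = s + sum id A'"
      using True Suc.prems(1) unfolding A'_def by (simp add: sum.remove)
    ultimately show ?thesis using IH by (simp add: algebra_simps)
  next
    case False
    then have "A \<subseteq> {..<s}" using Suc.prems(2) by (auto simp: less_Suc_eq)
    then have "2 * int (sum id A) \<le> int (card A) * (2 * int s - 1 - int (card A))"
      by (rule Suc.IH[OF Suc.prems(1)])
    also have "\<dots> \<le> int (card A) * (2 * int (Suc s) - 1 - int (card A))"
      by (intro mult_left_mono) auto
    finally show ?thesis .
  qed
qed simp

lemma sum_top_interval:
  "a \<le> s \<Longrightarrow> 2 * int (sum id {a..<s}) = int (s - a) * (2 * int s - 1 - int (s - a))"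
proof (induction s)
  case (Suc s)
  show ?case
  proof (cases "a = Suc s")
    case False
    then have as: "a \<le> s" using Suc.prems by simp
    have "sum id {a..<Suc s} = sum id {a..<s} + s" using as by simp
    then show ?thesis using Suc.IH[OF as] as by (simp add: of_nat_diff algebra_simps)
  qed simp
qed simp

section \<open>The energy of a level profile\<close>

text \<open>For a profile n (the level sizes), the energy is the largest value of twice_size
  compatible with it: level k contributes at most its n k largest residues.\<close>
definition energy :: "nat \<Rightarrow> nat \<Rightarrow> (nat \<Rightarrow> int) \<Rightarrow> int" where
  "energy s L n = (\<Sum>k<L. 2 * (int k + 1) * int s * n k - (n k)^2) - (\<Sum>k<L. n k)^2"

lemma energy_cong:
  assumes "\<And>k. k < L \<Longrightarrow> n k = n' k"
  shows "energy s L n = energy s L n'"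
proof -
  have "(\<Sum>k<L. n k) = (\<Sum>k<L. n' k)"
    and "(\<Sum>k<L. 2 * (int k + 1) * int s * n k - (n k)^2)
       = (\<Sum>k<L. 2 * (int k + 1) * int s * n' k - (n' k)^2)"
    using assms by (auto intro: sum.cong)
  then show ?thesis unfolding energy_def by simp
qed

lemma energy_eq_level_sum:
  "energy s L n = (\<Sum>k<L. 2 * (int k * int s * n k) + n k * (2 * int s - 1 - n k))
       - (\<Sum>k<L. n k) * ((\<Sum>k<L. n k) - 1)"
proof -
  have "(\<Sum>k<L. 2 * (int k * int s * n k) + n k * (2 * int s - 1 - n k))
     = (\<Sum>k<L. (2 * (int k + 1) * int s * n k - (n k)^2) - n k)"
    by (rule sum.cong) (auto simp: algebra_simps power2_eq_square)
  also have "\<dots> = (\<Sum>k<L. 2 * (int k + 1) * int s * n k - (n k)^2) - (\<Sum>k<L. n k)"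
    by (simp only: sum_subtractf)
  finally show ?thesis unfolding energy_def by (simp add: algebra_simps power2_eq_square)
qed

lemma twice_size_by_levels:
  assumes "finite B" "0 < s" "\<And>k. L \<le> k \<Longrightarrow> level B s k = {}"
  shows "twice_size B = (\<Sum>k<L. 2 * (int k * int s * level_profile B s k)
           + 2 * int (sum id (level B s k)))
         - (\<Sum>k<L. level_profile B s k) * ((\<Sum>k<L. level_profile B s k) - 1)"
  using level_decomposition[OF assms]
  by (simp add: twice_size_def level_profile_def sum_distrib_left algebra_simps)

lemma twice_size_le_energy:
  assumes "finite B" "0 < s" "\<And>k. L \<le> k \<Longrightarrow> level B s k = {}"
  shows "twice_size B \<le> energy s L (level_profile B s)"
proof -
  have "2 * int (sum id (level B s k)) \<le> level_profile B s k * (2 * int s - 1 - level_profile B s k)" for k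
    unfolding level_profile_def by (rule sum_below_le_top[OF finite_level]) (auto simp: level_def)
  then have "(\<Sum>k<L. 2 * (int k * int s * level_profile B s k) + 2 * int (sum id (level B s k)))
      \<le> (\<Sum>k<L. 2 * (int k * int s * level_profile B s k)
           + level_profile B s k * (2 * int s - 1 - level_profile B s k))"
    by (intro sum_mono add_left_mono)
  then show ?thesis using twice_size_by_levels[where L = L, OF assms] unfolding energy_eq_level_sum by linarith
qed

lemma twice_size_eq_energy:
  assumes "finite B" "0 < s" "\<And>k. L \<le> k \<Longrightarrow> level B s k = {}"
    and "\<And>k. k < L \<Longrightarrow> \<exists>a. level B s k = {a..<s}"
  shows "twice_size B = energy s L (level_profile B s)"
proof -
  have "2 * int (sum id (level B s k)) = level_profile B s k * (2 * int s - 1 - level_profile B s k)"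
    if k: "k < L" for k
  proof -
    obtain a where a: "level B s k = {a..<s}" using assms(4)[OF k] by blast
    show ?thesis
    proof (cases "a \<le> s")
      case True
      then show ?thesis unfolding level_profile_def a using sum_top_interval[of a s] by simp
    qed (simp add: level_profile_def a)
  qed
  then have "(\<Sum>k<L. 2 * (int k * int s * level_profile B s k) + 2 * int (sum id (level B s k)))
      = (\<Sum>k<L. 2 * (int k * int s * level_profile B s k)
           + level_profile B s k * (2 * int s - 1 - level_profile B s k))"
    by (intro sum.cong) auto
  then show ?thesis using twice_size_by_levels[where L = L, OF assms(1-3)]
    unfolding energy_eq_level_sum by linarith
qed

section \<open>The claimed maximum and the energy of centred profiles\<close>

definition max_core_size :: "nat \<Rightarrow> nat" where
  "max_core_size s = (if odd s then (let m = (s + 1) div 2 in m * ((m + 1) choose 3))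
     else (let m = s div 2 in (m + 1) * ((m + 1) choose 3) + ((m + 2) choose 3)))"

lemma choose3: "6 * (n choose 3) = n * (n - 1) * (n - 2)"
proof (cases "n < 3")
  case True
  then show ?thesis by (auto simp: numeral_3_eq_3 less_Suc_eq)
next
  case False
  then obtain k where n: "n = k + 3" by (metis add.commute le_iff_add not_less)
  have "fact k * (6 * (n choose 3)) = (fact n :: nat)"
    using binomial_fact_lemma[of 3 n] n by (simp add: fact_numeral)
  also have "\<dots> = fact k * (n * (n - 1) * (n - 2))"
    unfolding n by (simp add: numeral_3_eq_3 algebra_simps)
  finally show ?thesis by simp
qed

lemma max_core_size_odd:
  assumes "s = 2 * K + 1"
  shows "6 * int (max_core_size s) = (int K + 1) * (int K + 2) * (int K + 1) * int K"
proof -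
  have "6 * max_core_size s = (K + 1) * (6 * (K + 2 choose 3))"
    using assms unfolding max_core_size_def by (simp add: Let_def)
  also have "\<dots> = (K + 1) * ((K + 2) * (K + 1) * K)" by (simp add: choose3)
  finally have "int (6 * max_core_size s) = int ((K + 1) * ((K + 2) * (K + 1) * K))" by simp
  then show ?thesis by (simp add: algebra_simps)
qed

lemma max_core_size_even:
  assumes "s = 2 * K"
  shows "6 * int (max_core_size s)
    = (int K + 1) * (int K + 1) * int K * (int K - 1) + (int K + 2) * (int K + 1) * int K"
proof -
  have "6 * max_core_size s = (K + 1) * (6 * (K + 1 choose 3)) + 6 * (K + 2 choose 3)"
    using assms unfolding max_core_size_def by (simp add: Let_def algebra_simps)
  also have "\<dots> = (K + 1) * ((K + 1) * K * (K - 1)) + (K + 2) * (K + 1) * K"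
    by (simp add: choose3)
  finally have "int (6 * max_core_size s)
      = int ((K + 1) * ((K + 1) * K * (K - 1)) + (K + 2) * (K + 1) * K)" by simp
  then show ?thesis by (cases K) (simp_all add: algebra_simps)
qed

lemma energy_shift:
  "energy s L (\<lambda>k. a k + b k) = energy s L a
     + (\<Sum>k<L. (2 * (int k + 1) * int s - 2 * a k - 2 * (\<Sum>i<L. a i)) * b k)
     - (\<Sum>k<L. (b k)^2) - (\<Sum>k<L. b k)^2"
proof -
  let ?A = "\<Sum>i<L. a i" and ?B = "\<Sum>i<L. b i"
  have quad: "(\<Sum>k<L. 2 * (int k + 1) * int s * (a k + b k) - (a k + b k)^2)
      = (\<Sum>k<L. 2 * (int k + 1) * int s * a k - (a k)^2)
      + (\<Sum>k<L. (2 * (int k + 1) * int s - 2 * a k) * b k) - (\<Sum>k<L. (b k)^2)"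
    by (simp add: sum.distrib[symmetric] sum_subtractf[symmetric] power2_eq_square algebra_simps)
  have lin: "(\<Sum>k<L. (2 * (int k + 1) * int s - 2 * a k - 2 * ?A) * b k)
      = (\<Sum>k<L. (2 * (int k + 1) * int s - 2 * a k) * b k) - 2 * ?A * ?B"
    by (simp add: left_diff_distrib sum_subtractf sum_distrib_left)
  show ?thesis unfolding energy_def quad lin sum.distrib
    by (simp add: power2_eq_square algebra_simps)
qed

lemma energy_centred:
  "3 * energy s L (\<lambda>k. int c + int L - 1 - 2 * int k)
   = int s * int L * (int L + 1) * (3 * int c - int L + 1) - 3 * int L * (int c)^2
     - int L * ((int L)^2 - 1) - 3 * (int L)^2 * (int c)^2"
proof -
  define A where "A = int c + int L - 1"
  define S1 where "S1 = (\<Sum>k<L. int k)"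
  define S2 where "S2 = (\<Sum>k<L. (int k)^2)"
  have total: "(\<Sum>k<L. int c + int L - 1 - 2 * int k) = int L * A - 2 * S1"
    unfolding A_def S1_def by (simp add: sum_subtractf sum_distrib_left)
  have "(\<Sum>k<L. 2 * (int k + 1) * int s * (int c + int L - 1 - 2 * int k)
                  - (int c + int L - 1 - 2 * int k)^2)
     = (\<Sum>k<L. (2 * int s * A - A^2) + (2 * int s * (A - 2) + 4 * A) * int k
                  - (4 * int s + 4) * (int k)^2)"
    by (rule sum.cong) (auto simp: A_def algebra_simps power2_eq_square)
  also have "\<dots> = (2 * int s * A - A^2) * int L + (2 * int s * (A - 2) + 4 * A) * S1
                  - (4 * int s + 4) * S2"
    unfolding S1_def S2_def by (simp add: sum.distrib sum_subtractf sum_distrib_left)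
  finally have "3 * energy s L (\<lambda>k. int c + int L - 1 - 2 * int k)
     = 3 * ((2 * int s * A - A^2) * int L) + 3 * (int s * (A - 2) + 2 * A) * (2 * S1)
       - 2 * (int s + 1) * (6 * S2) - 3 * (int L * A - 2 * S1)^2"
    unfolding energy_def total by (simp add: algebra_simps)
  also have "\<dots> = int s * int L * (int L + 1) * (3 * int c - int L + 1) - 3 * int L * (int c)^2
     - int L * ((int L)^2 - 1) - 3 * (int L)^2 * (int c)^2"
    unfolding S1_def S2_def gauss_sum sum_squares A_def
    by (simp add: algebra_simps power2_eq_square power3_eq_cube)
  finally show ?thesis .
qed

text \<open>Centred at s div 2, a profile of length L \<le> s div 2 has energy at most twice the
  claimed maximum: the difference is a polynomial in L and s div 2 - L with nonnegative
  coefficients.\<close>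
lemma centred_energy_le:
  assumes "L \<le> s div 2"
  shows "energy s L (\<lambda>k. int (s div 2) + int L - 1 - 2 * int k) \<le> 2 * int (max_core_size s)"
proof -
  define K where "K = s div 2"
  obtain j where j: "K = L + j" using assms unfolding K_def by (metis le_iff_add)
  have "3 * energy s L (\<lambda>k. int K + int L - 1 - 2 * int k) \<le> 6 * int (max_core_size s)"
  proof (cases "odd s")
    case True
    then have s: "s = 2 * K + 1" unfolding K_def by presburger
    have "6 * int (max_core_size s) - 3 * energy s L (\<lambda>k. int K + int L - 1 - 2 * int k)
       = int (2*j + 5*j*L + 3*j*L^2 + 5*j^2 + 9*j^2*L + 3*j^2*L^2 + 4*j^3 + 4*j^3*L + j^4)"
      unfolding max_core_size_odd[OF s] energy_centred unfolding s j
      by (simp add: algebra_simps power2_eq_square power3_eq_cube power4_eq_xxxx)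
    then show ?thesis by linarith
  next
    case False
    then have s: "s = 2 * K" unfolding K_def by presburger
    have "6 * int (max_core_size s) - 3 * energy s L (\<lambda>k. int K + int L - 1 - 2 * int k)
       = int (j + 2*j*L + 2*j^2 + 3*j^2*L + 3*j^2*L^2 + 2*j^3 + 4*j^3*L + j^4)"
      unfolding max_core_size_even[OF s] energy_centred unfolding s j
      by (simp add: algebra_simps power2_eq_square power3_eq_cube power4_eq_xxxx)
    then show ?thesis by linarith
  qed
  then show ?thesis unfolding K_def by simp
qed

lemma energy_staircase:
  "energy s (s div 2) (\<lambda>k. int s - 1 - 2 * int k) = 2 * int (max_core_size s)"
proof -
  define K where "K = s div 2"
  have "3 * energy s K (\<lambda>k. int s - 1 - 2 * int k) = 6 * int (max_core_size s)"
  proof (cases "odd s")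
    case True
    then have s: "s = 2 * K + 1" unfolding K_def by presburger
    have profile: "(\<lambda>k. int s - 1 - 2 * int k) = (\<lambda>k. int (K + 1) + int K - 1 - 2 * int k)"
      using s by auto
    show ?thesis unfolding profile energy_centred max_core_size_odd[OF s]
      unfolding s by (simp add: algebra_simps power2_eq_square)
  next
    case False
    then have s: "s = 2 * K" unfolding K_def by presburger
    have profile: "(\<lambda>k. int s - 1 - 2 * int k) = (\<lambda>k. int K + int K - 1 - 2 * int k)"
      using s by auto
    show ?thesis unfolding profile energy_centred max_core_size_even[OF s]
      unfolding s by (simp add: algebra_simps power2_eq_square)
  qed
  then show ?thesis unfolding K_def by simp
qed

section \<open>Maximising the energy over admissible profiles\<close>

text \<open>The level profiles that occur for (s, s+1, s+2)-cores: the first L levels are nonempty,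
  level 0 avoids the residue 0, and each level is at least two larger than the next.\<close>
definition admissible_profile :: "nat \<Rightarrow> nat \<Rightarrow> (nat \<Rightarrow> int) \<Rightarrow> bool" where
  "admissible_profile s L n \<longleftrightarrow> (\<forall>k<L. 1 \<le> n k) \<and> (0 < L \<longrightarrow> n 0 \<le> int s - 1)
     \<and> (\<forall>k. Suc k < L \<longrightarrow> n (Suc k) + 2 \<le> n k)"

lemma admissible_excess_antitone:
  assumes "admissible_profile s L n" "i \<le> j" "j < L"
  shows "n j + 2 * int j \<le> n i + 2 * int i"
proof (rule lift_Suc_antimono_le_ivl[where f = "\<lambda>k. n k + 2 * int k" and N = "{k. Suc k < L}"])
  show "n (Suc k) + 2 * int (Suc k) \<le> n k + 2 * int k" if "k \<in> {k. Suc k < L}" for k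
    using assms(1) that unfolding admissible_profile_def by auto
qed (use assms(2,3) in auto)

lemma admissible_length:
  assumes "admissible_profile s L n"
  shows "L \<le> s div 2"
proof (cases "L = 0")
  case False
  have "n (L - 1) + 2 * int (L - 1) \<le> n 0"
    using admissible_excess_antitone[OF assms, of 0 "L - 1"] False by simp
  moreover have "1 \<le> n (L - 1)" "n 0 \<le> int s - 1"
    using assms False unfolding admissible_profile_def by auto
  ultimately show ?thesis using False by linarith
qed simp

lemma antitone_moment:
  fixes x :: "nat \<Rightarrow> int"
  assumes antitone: "\<And>i j. i \<le> j \<Longrightarrow> j < L \<Longrightarrow> x j \<le> x i"
  defines "C \<equiv> \<Sum>k<L. (int L - 1 - 2 * int k) * x k"
  shows "0 \<le> C" and "2 \<le> L \<Longrightarrow> (int L - 1) * (x 0 - x (L - 1)) \<le> C"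
proof -
  let ?t = "\<lambda>k. (int L - 1 - 2 * int k) * (x k - x (L - 1 - k))"
  have "(\<Sum>k<L. (int L - 1 - 2 * int k) * x (L - 1 - k))
      = (\<Sum>k<L. (int L - 1 - 2 * int (L - 1 - k)) * x k)"
    using sum.nat_diff_reindex[of "\<lambda>k. (int L - 1 - 2 * int (L - 1 - k)) * x k" L]
    by (auto intro!: sum.cong simp: of_nat_diff)
  also have "\<dots> = (\<Sum>k<L. - ((int L - 1 - 2 * int k) * x k))"
    by (rule sum.cong) (auto simp: of_nat_diff algebra_simps)
  finally have pairing: "2 * C = (\<Sum>k<L. ?t k)"
    unfolding C_def right_diff_distrib sum_subtractf by (simp add: sum_negf)
  have terms: "0 \<le> ?t k" if "k < L" for k
  proof (cases "2 * k \<le> L - 1")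
    case True
    then show ?thesis using that antitone[of k "L - 1 - k"] by simp
  next
    case False
    then show ?thesis using that antitone[of "L - 1 - k" k] by (simp add: mult_nonpos_nonpos)
  qed
  then show "0 \<le> C" using pairing sum_nonneg[of "{..<L}" ?t] by simp
  assume L2: "2 \<le> L"
  have "(\<Sum>k\<in>{0, L - 1}. ?t k) \<le> (\<Sum>k<L. ?t k)"
    by (rule sum_mono2) (use L2 terms in auto)
  moreover have "(\<Sum>k\<in>{0, L - 1}. ?t k) = 2 * ((int L - 1) * (x 0 - x (L - 1)))"
    using L2 by (simp add: of_nat_diff algebra_simps)
  ultimately show "(int L - 1) * (x 0 - x (L - 1)) \<le> C" using pairing by linarith
qed

text \<open>Writing a profile as the centred profile plus a deviation x: with s = 2K + e, the
  linear term of the energy only sees the moment C and the total of x.\<close>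
lemma energy_around_centred:
  fixes x :: "nat \<Rightarrow> int"
  assumes "int s = 2 * int K + e"
  shows "energy s L (\<lambda>k. (int K + int L - 1 - 2 * int k) + x k)
    = energy s L (\<lambda>k. int K + int L - 1 - 2 * int k)
      - (int s + 2) * (\<Sum>k<L. (int L - 1 - 2 * int k) * x k)
      + e * (int L + 1) * (\<Sum>k<L. x k) - (\<Sum>k<L. (x k)^2) - (\<Sum>k<L. x k)^2"
proof -
  let ?c = "\<lambda>k. int K + int L - 1 - 2 * int k"
  have "(\<Sum>i<L. ?c i) = int L * (int K + int L - 1) - 2 * (\<Sum>i<L. int i)"
    by (simp add: sum_subtractf sum_distrib_left)
  then have total: "(\<Sum>i<L. ?c i) = int L * int K"
    unfolding gauss_sum by (simp add: algebra_simps)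
  have "(\<Sum>k<L. (2 * (int k + 1) * int s - 2 * ?c k - 2 * (\<Sum>i<L. ?c i)) * x k)
      = (\<Sum>k<L. (- (int s + 2)) * ((int L - 1 - 2 * int k) * x k) + (e * (int L + 1)) * x k)"
    unfolding total by (rule sum.cong) (auto simp: assms algebra_simps)
  also have "\<dots> = - (int s + 2) * (\<Sum>k<L. (int L - 1 - 2 * int k) * x k)
                   + e * (int L + 1) * (\<Sum>k<L. x k)"
    by (simp only: sum.distrib sum_distrib_left mult_minus_left)
  finally have linear: "(\<Sum>k<L. (2 * (int k + 1) * int s - 2 * ?c k - 2 * (\<Sum>i<L. ?c i)) * x k)
      = - (int s + 2) * (\<Sum>k<L. (int L - 1 - 2 * int k) * x k)
        + e * (int L + 1) * (\<Sum>k<L. x k)" .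
  show ?thesis unfolding energy_shift linear mult_minus_left by linarith
qed

text \<open>For odd s the deviation may raise the linear term by (L + 1) X, but this is paid for:
  a constant integer deviation loses its gain in the quadratic terms, and a non-constant
  one has moment at least L - 1.\<close>
lemma odd_deviation_nonpos:
  fixes x :: "nat \<Rightarrow> int"
  assumes antitone: "\<And>i j. i \<le> j \<Longrightarrow> j < L \<Longrightarrow> x j \<le> x i"
    and "0 < L" "2 * L + 1 \<le> s"
  defines "C \<equiv> \<Sum>k<L. (int L - 1 - 2 * int k) * x k" and "X \<equiv> \<Sum>k<L. x k"
  shows "(int L + 1) * X - (\<Sum>k<L. (x k)^2) - X^2 \<le> (int s + 2) * C"
proof (cases "x (L - 1) = x 0")
  case True
  define c where "c = x 0"
  have const: "x k = c" if "k < L" for k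
    using that True antitone[of 0 k] antitone[of k "L - 1"] unfolding c_def by simp
  have "X = (\<Sum>k<L. c)" unfolding X_def by (rule sum.cong) (simp_all add: const)
  moreover have "(\<Sum>k<L. (x k)^2) = (\<Sum>k<L. c^2)" by (rule sum.cong) (simp_all add: const)
  ultimately have "(int L + 1) * X - (\<Sum>k<L. (x k)^2) - X^2 = int L * (int L + 1) * (c * (1 - c))"
    by (simp add: algebra_simps power2_eq_square)
  moreover have "c * (1 - c) \<le> 0"
    by (cases "c \<le> 0") (auto intro: mult_nonpos_nonneg mult_nonneg_nonpos)
  then have "int L * (int L + 1) * (c * (1 - c)) \<le> 0"
    by (simp add: mult_nonneg_nonpos)
  moreover have "0 \<le> C" unfolding C_def by (rule antitone_moment(1)[where x = x, OF antitone])
  then have "0 \<le> (int s + 2) * C" by simp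
  ultimately show ?thesis by linarith
next
  case False
  then have "x (L - 1) < x 0" using antitone[of 0 "L - 1"] assms(2) by force
  moreover have L2: "2 \<le> L" using False by (cases "L = 1") auto
  ultimately have "int L - 1 \<le> (int L - 1) * (x 0 - x (L - 1))"
    by (simp add: mult_le_cancel_left1)
  then have "int L - 1 \<le> C"
    using antitone_moment(2)[where x = x, OF antitone L2] unfolding C_def by linarith
  then have "(2 * int L + 3) * (int L - 1) \<le> (int s + 2) * C"
    using assms(3) L2 by (intro mult_mono) auto
  moreover have "4 * ((int L + 1) * X - X^2) \<le> (int L + 1)^2"
    using zero_le_square[of "int L + 1 - 2 * X"] by (simp add: power2_eq_square algebra_simps)
  moreover have "(int L + 1)^2 \<le> 4 * ((2 * int L + 3) * (int L - 1))"
    using L2 mult_mono[of 2 "int L" 2 "int L"] by (simp add: power2_eq_square algebra_simps)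
  moreover have "0 \<le> (\<Sum>k<L. (x k)^2)" by (simp add: sum_nonneg)
  ultimately show ?thesis by (smt (verit))
qed

lemma energy_le_max_core_size:
  assumes adm: "admissible_profile s L n"
  shows "energy s L n \<le> 2 * int (max_core_size s)"
proof (cases "L = 0")
  case True
  then show ?thesis unfolding energy_def by simp
next
  case False
  define K where "K = s div 2"
  define e where "e = int (s mod 2)"
  define x where "x k = n k - (int K + int L - 1 - 2 * int k)" for k
  define C where "C = (\<Sum>k<L. (int L - 1 - 2 * int k) * x k)"
  define X where "X = (\<Sum>k<L. x k)"
  have "s = 2 * K + s mod 2" unfolding K_def by simp
  then have se: "int s = 2 * int K + e" unfolding e_def by (metis of_nat_add of_nat_mult of_nat_numeral)
  have LK: "L \<le> K" unfolding K_def by (rule admissible_length[OF adm])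
  have antitone: "x j \<le> x i" if "i \<le> j" "j < L" for i j
    using admissible_excess_antitone[OF adm that] unfolding x_def by simp
  have "n = (\<lambda>k. (int K + int L - 1 - 2 * int k) + x k)" unfolding x_def by simp
  then have split: "energy s L n = energy s L (\<lambda>k. int K + int L - 1 - 2 * int k)
      - (int s + 2) * C + e * (int L + 1) * X - (\<Sum>k<L. (x k)^2) - X^2"
    using energy_around_centred[OF se, of L x] unfolding C_def X_def by simp
  have "e * (int L + 1) * X - (\<Sum>k<L. (x k)^2) - X^2 \<le> (int s + 2) * C"
  proof (cases "e = 0")
    case True
    have "0 \<le> C" unfolding C_def by (rule antitone_moment(1)[where x = x, OF antitone])
    then have "0 \<le> (int s + 2) * C" by simp
    moreover have "0 \<le> (\<Sum>k<L. (x k)^2)" "0 \<le> X^2" by (simp_all add: sum_nonneg)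
    moreover have "e * (int L + 1) * X = 0" using True by simp
    ultimately show ?thesis by linarith
  next
    case False
    then have "e = 1" "2 * L + 1 \<le> s" using se LK unfolding e_def by auto
    then show ?thesis
      using odd_deviation_nonpos[where x = x and L = L, OF antitone] \<open>L \<noteq> 0\<close>
      unfolding C_def X_def by simp
  qed
  moreover have "energy s L (\<lambda>k. int K + int L - 1 - 2 * int k) \<le> 2 * int (max_core_size s)"
    using centred_energy_le LK unfolding K_def by blast
  ultimately show ?thesis unfolding split by linarith
qed

section \<open>Sets closed under subtracting s, s + 1 and s + 2\<close>

definition triple_closed :: "nat \<Rightarrow> nat set \<Rightarrow> bool" where
  "triple_closed s B \<longleftrightarrow> sub_closed s B \<and> sub_closed (s + 1) B \<and> sub_closed (s + 2) B"

text \<open>Subtracting s, s + 1, s + 2 moves a bead one level down and its residue by 0, 1, 2.\<close>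
lemma level_descent:
  assumes "triple_closed s B" "r \<in> level B s (Suc k)"
  shows "r \<in> level B s k" and "1 \<le> r \<Longrightarrow> r - 1 \<in> level B s k"
    and "2 \<le> r \<Longrightarrow> r - 2 \<in> level B s k"
proof -
  have r: "r < s" "Suc k * s + r \<in> B" using assms(2) unfolding level_def by auto
  have sub: "Suc k * s + r - t \<in> B" if "t \<in> {s, s + 1, s + 2}" "t \<le> Suc k * s + r" for t
    using assms(1) r(2) that unfolding triple_closed_def sub_closed_def by auto
  show "r \<in> level B s k" using sub[of s] r(1) unfolding level_def by simp
  show "r - 1 \<in> level B s k" if "1 \<le> r"
    using sub[of "s + 1"] r(1) that unfolding level_def by (simp add: algebra_simps)
  show "r - 2 \<in> level B s k" if "2 \<le> r"
    using sub[of "s + 2"] r(1) that unfolding level_def by (simp add: algebra_simps)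
qed

text \<open>Residues on level k are at least 2k + 1: level 0 avoids 0 and each step down
  needs room for the residues r - 1 and r - 2.\<close>
lemma level_gap:
  assumes "triple_closed s B" "0 \<notin> B" "r \<in> level B s k"
  shows "2 * k + 1 \<le> r"
  using assms(3)
proof (induction k arbitrary: r)
  case 0
  then show ?case using assms(2) unfolding level_def by (cases r) auto
next
  case (Suc k)
  have "2 * k + 1 \<le> r" by (rule Suc.IH[OF level_descent(1)[OF assms(1) Suc.prems]])
  then have "2 * k + 1 \<le> r - 1" by (intro Suc.IH level_descent(2)[OF assms(1) Suc.prems]) simp
  then have "2 * k + 1 \<le> r - 2" by (intro Suc.IH level_descent(3)[OF assms(1) Suc.prems]) simp
  then show ?case by simp
qed

text \<open>A nonempty level is smaller than the level below by at least two: if r0 is its least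
  residue, the level below contains it together with r0 - 1 and r0 - 2.\<close>
lemma level_card_step:
  assumes "triple_closed s B" "0 \<notin> B" "level B s (Suc k) \<noteq> {}"
  shows "card (level B s (Suc k)) + 2 \<le> card (level B s k)"
proof -
  let ?V = "level B s"
  define r0 where "r0 = Min (?V (Suc k))"
  have r0: "r0 \<in> ?V (Suc k)" unfolding r0_def using Min_in[OF finite_level assms(3)] .
  have gap: "2 * Suc k + 1 \<le> r0" by (rule level_gap[OF assms(1,2) r0])
  have "?V (Suc k) \<subseteq> ?V k - {r0 - 1, r0 - 2}"
  proof
    fix r assume r: "r \<in> ?V (Suc k)"
    have "r0 \<le> r" unfolding r0_def using Min_le[OF finite_level r] .
    then show "r \<in> ?V k - {r0 - 1, r0 - 2}" using level_descent(1)[OF assms(1) r] gap by auto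
  qed
  then have "card (?V (Suc k)) \<le> card (?V k - {r0 - 1, r0 - 2})"
    by (rule card_mono[OF finite_Diff[OF finite_level]])
  moreover have "{r0 - 1, r0 - 2} \<subseteq> ?V k" using level_descent(2,3)[OF assms(1) r0] gap by auto
  moreover have "card {r0 - 1, r0 - 2} = 2" using gap by simp
  ultimately show ?thesis using card_Diff_subset[OF _ \<open>{r0 - 1, r0 - 2} \<subseteq> ?V k\<close>]
      card_mono[OF finite_level \<open>{r0 - 1, r0 - 2} \<subseteq> ?V k\<close>] by simp
qed

lemma admissible_level_profile:
  assumes "finite B" "0 < s" "0 \<notin> B" "triple_closed s B"
  obtains L where "admissible_profile s L (level_profile B s)"
    and "\<And>k. L \<le> k \<Longrightarrow> level B s k = {}"
proof -
  let ?V = "level B s"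
  have "?V (Suc (sum id B)) = {}"
  proof -
    have "b \<le> sum id B" if "b \<in> B" for b using member_le_sum[OF that, of id] assms(1) by simp
    moreover have "Suc (sum id B) \<le> Suc (sum id B) * s" using assms(2) by (simp del: mult_Suc)
    ultimately show ?thesis unfolding level_def by fastforce
  qed
  then have exists_empty: "\<exists>k. ?V k = {}" by blast
  define L where "L = (LEAST k. ?V k = {})"
  have empty: "?V k = {}" if "L \<le> k" for k
    using that
  proof (induction k rule: dec_induct)
    case base then show ?case unfolding L_def by (rule LeastI_ex[OF exists_empty])
  next
    case (step k) then show ?case using level_descent(1)[OF assms(4)] by blast
  qed
  have nonempty: "?V k \<noteq> {}" if "k < L" for k
    using not_less_Least[of k "\<lambda>k. ?V k = {}"] that unfolding L_def by blast
  have "?V 0 \<subseteq> {1..<s}" using assms(3) unfolding level_def by (auto simp: Suc_le_eq intro: Nat.gr0I)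
  then have "card (?V 0) \<le> s - 1" using card_mono[of "{1..<s}" "?V 0"] by simp
  have "admissible_profile s L (level_profile B s)"
    unfolding admissible_profile_def level_profile_def
  proof (intro conjI allI impI)
    show "1 \<le> int (card (?V k))" if "k < L" for k
      using nonempty[OF that] finite_level by (simp add: Suc_le_eq card_gt_0_iff)
    show "int (card (?V 0)) \<le> int s - 1" using \<open>card (?V 0) \<le> s - 1\<close> assms(2) by linarith
    show "int (card (?V (Suc k))) + 2 \<le> int (card (?V k))" if "Suc k < L" for k
      using level_card_step[OF assms(4,3) nonempty[OF that]] by simp
  qed
  then show ?thesis using that empty by blast
qed

lemma twice_size_le_max_core_size:
  assumes "finite B" "0 < s" "0 \<notin> B" "triple_closed s B"
  shows "twice_size B \<le> 2 * int (max_core_size s)"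
proof -
  obtain L where "admissible_profile s L (level_profile B s)" "\<And>k. L \<le> k \<Longrightarrow> level B s k = {}"
    using admissible_level_profile[OF assms] by blast
  then show ?thesis
    using twice_size_le_energy[OF assms(1,2)] energy_le_max_core_size by (meson order_trans)
qed

section \<open>The extremal set\<close>

text \<open>The beta-set of the largest core: level k holds the residues 2k + 1, ..., s - 1.\<close>
definition staircase_set :: "nat \<Rightarrow> nat set" where
  "staircase_set s = {k * s + r | k r. 2 * k + 1 \<le> r \<and> r < s}"

lemma level_staircase_set: "level (staircase_set s) s k = {2 * k + 1..<s}"
  unfolding level_def staircase_set_def by (auto 4 3 dest: uniq_divmod)

lemma zero_notin_staircase_set: "0 \<notin> staircase_set s"
  unfolding staircase_set_def by auto

lemma finite_staircase_set: "finite (staircase_set s)"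
proof (rule finite_subset[of _ "{..<s * s}"])
  show "staircase_set s \<subseteq> {..<s * s}"
  proof
    fix b assume "b \<in> staircase_set s"
    then obtain k r where b: "b = k * s + r" "2 * k + 1 \<le> r" "r < s"
      unfolding staircase_set_def by auto
    then have "Suc k * s \<le> s * s" by (intro mult_le_mono1) simp
    then show "b \<in> {..<s * s}" using b by simp
  qed
qed simp

lemma triple_closed_staircase_set: "triple_closed s (staircase_set s)"
  unfolding triple_closed_def sub_closed_def
proof (intro conjI ballI impI)
  have step: "b - t \<in> staircase_set s"
    if b: "b \<in> staircase_set s" and t: "s \<le> t" "t \<le> s + 2" "t \<le> b" for b t
  proof -
    obtain k r where kr: "b = k * s + r" "2 * k + 1 \<le> r" "r < s"
      using b unfolding staircase_set_def by auto
    obtain k' where k': "k = Suc k'" using kr t by (cases k) auto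
    have "b - t = k' * s + (r - (t - s))" "2 * k' + 1 \<le> r - (t - s)" "r - (t - s) < s"
      using kr k' t by auto
    then show ?thesis unfolding staircase_set_def by blast
  qed
  fix b assume "b \<in> staircase_set s"
  then show "s \<le> b \<Longrightarrow> b - s \<in> staircase_set s"
    and "s + 1 \<le> b \<Longrightarrow> b - (s + 1) \<in> staircase_set s"
    and "s + 2 \<le> b \<Longrightarrow> b - (s + 2) \<in> staircase_set s" by (auto intro: step)
qed

lemma twice_size_staircase_set:
  assumes "0 < s"
  shows "twice_size (staircase_set s) = 2 * int (max_core_size s)"
proof -
  have "twice_size (staircase_set s) = energy s (s div 2) (level_profile (staircase_set s) s)"
    by (rule twice_size_eq_energy[OF finite_staircase_set assms])
       (auto simp: level_staircase_set)
  also have "\<dots> = energy s (s div 2) (\<lambda>k. int s - 1 - 2 * int k)"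
    by (rule energy_cong) (auto simp: level_profile_def level_staircase_set of_nat_diff)
  also have "\<dots> = 2 * int (max_core_size s)" by (rule energy_staircase)
  finally show ?thesis .
qed

lemma triple_core_iff:
  assumes "0 < s"
  shows "is_s_triple_core s p \<longleftrightarrow> partition p \<and> triple_closed s (beta_set p)"
  unfolding is_s_triple_core_def triple_closed_def using is_core_iff_sub_closed assms by auto

theorem corollary3p5:
  fixes s :: nat
  assumes "0 < s"
  shows "is_max_triple_core_size s
    (if odd s then (let m = (s + 1) div 2 in m * ((m + 1) choose 3))
     else (let m = s div 2 in (m + 1) * ((m + 1) choose 3) + ((m + 2) choose 3)))"
proof -
  obtain p where p: "partition p" "beta_set p = staircase_set s"
    using beta_set_surj[OF finite_staircase_set zero_notin_staircase_set] by blast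
  have "is_s_triple_core s p" "psize p = max_core_size s"
    using p triple_core_iff[OF assms] triple_closed_staircase_set
      twice_size_staircase_set[OF assms] twice_size_beta_set[OF p(1)] by auto
  moreover have "psize q \<le> max_core_size s" if "is_s_triple_core s q" for q
  proof -
    have q: "partition q" "triple_closed s (beta_set q)" using that triple_core_iff[OF assms] by auto
    have "finite (beta_set q)" unfolding beta_set_def by simp
    then show ?thesis
      using twice_size_le_max_core_size[OF _ assms zero_notin_beta_set[OF q(1)] q(2)]
        twice_size_beta_set[OF q(1)] by simp
  qed
  ultimately show ?thesis
    unfolding is_max_triple_core_size_def max_core_size_def[symmetric] by blast
qed

end
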